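(* For every integer $n>2$ there exists a unique $\zeta_n>1$ such that the system $$P_n'(1-\varepsilon_{j+1})-P_n'(1-\varepsilon_j)=\varepsilon_{j+1}P_n'(1-\varepsilon_{j+1})+P_n(1-\varepsilon_{j+1})-\frac{j}{\zeta_n},\qquad j=1,\dots,n-1,$$ with initial condition $\varepsilon_1=1$ has a solution $(\varepsilon_j)_{j=1}^n$ satisfying $0\le\varepsilon_n<\dots<\varepsilon_2<\varepsilon_1=1$ and $$\zeta_n=\frac{n}{\varepsilon_nP_n'(1-\varepsilon_n)+P_n(1-\varepsilon_n)}.$$
   Context: $P_n(t)=\sum_{i=1}^nt^i$ and $P_n'(t)=\sum_{i=1}^n i\,t^{i-1}$. *)

theory Defs
  imports Complex_Main
begin

definition P :: "nat \<Rightarrow> real \<Rightarrow> real" where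
  "P n t = (\<Sum>i=1..n. t ^ i)"

definition P' :: "nat \<Rightarrow> real \<Rightarrow> real" where
  "P' n t = (\<Sum>i=1..n. real i * t ^ (i - 1))"

end

theory Submission imports Defs begin

(*
  Put t_j = 1 - eps_j and s = 1/zeta. The j-th equation becomes
  P_legendre n t_(j+1) = P' n t_j - j s, with P_legendre n t = t P'(t) - P(t), and the
  formula for zeta becomes P_tangent_1 n t_n = n s, where P_tangent_1 n t = P(t) + (1 - t) P'(t)
  is the value at 1 of the tangent to P at t. On [0,1], P_legendre n is strictly increasing
  (n >= 2) and P_tangent_1 n is nondecreasing (P is convex).

  Uniqueness: a larger s makes every t_j smaller, by induction on j, hence P_tangent_1 n t_n
  smaller, while n s grows.

  Existence is a shooting argument. Starting from t_1 = 0 and inverting P_legendre n, clamped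
  to [0,1], yields t_j depending continuously on s; P_tangent_1 n t_n - n s is positive at s = 0
  and negative at s = 1, hence vanishes for some s in (0,1). For this s the clamping is never
  active: the defect P_tangent_1 n t_k - k s, once nonpositive, stays negative, so it is positive
  before the last step and pushes each P_legendre value above the previous one; and t_k cannot
  reach 1, since then it would stay 1 up to t_n, forcing s = 1.
*)

definition P_legendre :: "nat \<Rightarrow> real \<Rightarrow> real" where
  "P_legendre n t = t * P' n t - P n t"

definition P_tangent_1 :: "nat \<Rightarrow> real \<Rightarrow> real" where
  "P_tangent_1 n t = P n t + (1 - t) * P' n t"

lemma P'_eq_P_legendre_plus_P_tangent_1: "P' n t = P_legendre n t + P_tangent_1 n t"
  by (simp add: P_legendre_def P_tangent_1_def algebra_simps)

lemma P_0 [simp]: "P n 0 = 0"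
  by (simp add: P_def power_0_left)

lemma P_1 [simp]: "P n 1 = real n"
  by (simp add: P_def)

lemma P'_0: "1 \<le> n \<Longrightarrow> P' n 0 = 1"
  by (simp add: P'_def power_0_left sum.atLeast_Suc_atMost)

lemma P_tangent_1_0: "1 \<le> n \<Longrightarrow> P_tangent_1 n 0 = 1"
  by (simp add: P_tangent_1_def P'_0)

lemma P_tangent_1_1 [simp]: "P_tangent_1 n 1 = real n"
  by (simp add: P_tangent_1_def)

lemma continuous_on_P: "continuous_on S (P n)"
  unfolding P_def by (intro continuous_intros)

lemma continuous_on_P': "continuous_on S (P' n)"
  unfolding P'_def by (intro continuous_intros)

lemma continuous_on_P_legendre: "continuous_on S (P_legendre n)"
  unfolding P_legendre_def by (intro continuous_intros continuous_on_P continuous_on_P')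

lemma continuous_on_P_tangent_1: "continuous_on S (P_tangent_1 n)"
  unfolding P_tangent_1_def by (intro continuous_intros continuous_on_P continuous_on_P')

lemma P'_mono: "0 \<le> a \<Longrightarrow> a \<le> b \<Longrightarrow> P' n a \<le> P' n b"
  unfolding P'_def by (intro sum_mono mult_left_mono power_mono) auto

lemma power_diff_ge_tangent:
  fixes a b :: "'a::linordered_idom"
  assumes "0 \<le> a" "a \<le> b"
  shows "of_nat i * a ^ (i - 1) * (b - a) \<le> b ^ i - a ^ i"
proof (cases i)
  case 0
  then show ?thesis by simp
next
  case (Suc m)
  have "of_nat i * a ^ m = (\<Sum>k<i. a ^ (i - Suc k) * a ^ k)"
    using Suc by (simp add: power_add[symmetric])
  also have "\<dots> \<le> (\<Sum>k<i. a ^ (i - Suc k) * b ^ k)"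
    using assms by (intro sum_mono mult_left_mono power_mono) auto
  finally have "(b - a) * (of_nat i * a ^ m) \<le> (b - a) * (\<Sum>k<i. a ^ (i - Suc k) * b ^ k)"
    using assms by (intro mult_left_mono) auto
  also have "\<dots> = b ^ i - a ^ i"
    by (rule power_diff_sumr2[symmetric])
  finally show ?thesis
    using Suc by (simp add: mult_ac)
qed

lemma P'_mult_diff_le_P_diff: "0 \<le> a \<Longrightarrow> a \<le> b \<Longrightarrow> P' n a * (b - a) \<le> P n b - P n a"
  unfolding P_def P'_def using power_diff_ge_tangent[of a b]
  by (auto simp: sum_distrib_right sum_subtractf[symmetric] intro!: sum_mono)

lemma mono_on_P_tangent_1: "mono_on {0..1} (P_tangent_1 n)"
proof (rule mono_onI)
  fix a b :: real assume "a \<in> {0..1}" "b \<in> {0..1}" "a \<le> b"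
  then have "0 \<le> (1 - b) * (P' n b - P' n a)"
    using P'_mono[of a b n] by simp
  with P'_mult_diff_le_P_diff[of a b n] \<open>a \<in> {0..1}\<close> \<open>a \<le> b\<close>
  show "P_tangent_1 n a \<le> P_tangent_1 n b"
    unfolding P_tangent_1_def by (simp add: algebra_simps)
qed

lemma P_legendre_eq_sum: "P_legendre n t = (\<Sum>i=1..n. (real i - 1) * t ^ i)"
proof -
  have "t * (real i * t ^ (i - 1)) - t ^ i = (real i - 1) * t ^ i" if "1 \<le> i" for i
    using that by (cases i) (auto simp: algebra_simps)
  then show ?thesis
    unfolding P_legendre_def P_def P'_def
    by (simp add: sum_distrib_left sum_subtractf[symmetric])
qed

lemma P_legendre_0 [simp]: "P_legendre n 0 = 0"
  by (simp add: P_legendre_eq_sum power_0_left)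

lemma P_legendre_nonneg: "0 \<le> t \<Longrightarrow> 0 \<le> P_legendre n t"
  unfolding P_legendre_eq_sum by (intro sum_nonneg) auto

lemma strict_mono_on_P_legendre:
  assumes "2 \<le> n"
  shows "strict_mono_on {0..} (P_legendre n)"
proof (rule strict_mono_onI)
  fix a b :: real assume "a \<in> {0..}" "a < b"
  show "P_legendre n a < P_legendre n b"
    unfolding P_legendre_eq_sum
  proof (rule sum_strict_mono_ex1)
    show "\<forall>i\<in>{1..n}. (real i - 1) * a ^ i \<le> (real i - 1) * b ^ i"
      using \<open>a \<in> {0..}\<close> \<open>a < b\<close> by (auto intro!: mult_left_mono power_mono)
    show "\<exists>i\<in>{1..n}. (real i - 1) * a ^ i < (real i - 1) * b ^ i"
      using assms \<open>a \<in> {0..}\<close> \<open>a < b\<close> by (intro bexI[of _ 2]) (auto intro: power_strict_mono)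
  qed simp
qed

definition clamped_inv :: "real \<Rightarrow> real \<Rightarrow> (real \<Rightarrow> real) \<Rightarrow> real \<Rightarrow> real" where
  "clamped_inv a b f y = inv_into {a..b} f (max (f a) (min (f b) y))"

context
  fixes a b :: real and f :: "real \<Rightarrow> real"
  assumes le: "a \<le> b" and cont: "continuous_on {a..b} f" and smono: "strict_mono_on {a..b} f"
begin

lemma image_Icc_strict_mono: "f ` {a..b} = {f a..f b}"
proof
  show "f ` {a..b} \<subseteq> {f a..f b}"
    using strict_mono_on_leD[OF smono] le by auto
  show "{f a..f b} \<subseteq> f ` {a..b}"
  proof
    fix y assume "y \<in> {f a..f b}"
    then obtain x where "a \<le> x" "x \<le> b" "f x = y"
      using IVT'[of f a y b] le cont by auto
    then show "y \<in> f ` {a..b}" by force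
  qed
qed

lemma clamp_in_image: "max (f a) (min (f b) y) \<in> f ` {a..b}"
  using strict_mono_on_leD[OF smono, of a b] le by (auto simp: image_Icc_strict_mono)

lemma clamped_inv_in_Icc: "clamped_inv a b f y \<in> {a..b}"
  unfolding clamped_inv_def by (rule inv_into_into[OF clamp_in_image])

lemma f_clamped_inv: "f (clamped_inv a b f y) = max (f a) (min (f b) y)"
  unfolding clamped_inv_def by (rule f_inv_into_f[OF clamp_in_image])

lemma continuous_on_clamped_inv: "continuous_on UNIV (clamped_inv a b f)"
proof -
  have inv: "continuous_on (f ` {a..b}) (inv_into {a..b} f)"
    using inv_into_f_f[OF strict_mono_on_imp_inj_on[OF smono]]
    by (intro continuous_on_inv[OF cont]) auto
  have "continuous_on UNIV (\<lambda>y. max (f a) (min (f b) y))"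
    by (intro continuous_intros)
  then show ?thesis
    unfolding clamped_inv_def by (rule continuous_on_compose2[OF inv]) (auto intro: clamp_in_image)
qed

end

definition solves_system :: "nat \<Rightarrow> real \<Rightarrow> (nat \<Rightarrow> real) \<Rightarrow> bool" where
  "solves_system n s t \<longleftrightarrow>
     t 1 = 0 \<and>
     (\<forall>j\<in>{1..n-1}. P_legendre n (t (j+1)) = P' n (t j) - real j * s) \<and>
     t n \<le> 1 \<and>
     (\<forall>j\<in>{1..n-1}. t j < t (j+1)) \<and>
     P_tangent_1 n (t n) = real n * s"

lemma solves_system_in_01:
  assumes "solves_system n s t" "j \<in> {1..n}"
  shows "t j \<in> {0..1}"
proof -
  have step: "t i \<le> t (Suc i)" if "i \<in> {1..n-1}" for i
    using assms(1) that unfolding solves_system_def by fastforce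
  have "t 1 \<le> t j"
    using assms(2) by (intro lift_Suc_mono_le_ivl[where N = "{1..n-1}" and f = t, OF step]) auto
  moreover have "t j \<le> t n"
    using assms(2) by (intro lift_Suc_mono_le_ivl[where N = "{1..n-1}" and f = t, OF step]) auto
  ultimately show ?thesis
    using assms(1) unfolding solves_system_def by auto
qed

context
  fixes n :: nat
  assumes n: "2 \<le> n"
begin

lemma P_legendre_eq_iff: "0 \<le> x \<Longrightarrow> 0 \<le> y \<Longrightarrow> P_legendre n x = P_legendre n y \<longleftrightarrow> x = y"
  using strict_mono_on_eq[OF strict_mono_on_P_legendre[OF n]] by simp

lemma P_legendre_le_iff: "0 \<le> x \<Longrightarrow> 0 \<le> y \<Longrightarrow> P_legendre n x \<le> P_legendre n y \<longleftrightarrow> x \<le> y"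
  using strict_mono_on_less_eq[OF strict_mono_on_P_legendre[OF n]] by simp

lemma P_legendre_less_iff: "0 \<le> x \<Longrightarrow> 0 \<le> y \<Longrightarrow> P_legendre n x < P_legendre n y \<longleftrightarrow> x < y"
  using strict_mono_on_less[OF strict_mono_on_P_legendre[OF n]] by simp

lemma solves_system_comparison:
  assumes t: "solves_system n s t" and t': "solves_system n s' t'" and "s \<le> s'"
  shows "j \<in> {1..n} \<Longrightarrow> t' j \<le> t j"
proof (induction j)
  case (Suc j)
  show ?case
  proof (cases "j = 0")
    case True
    then show ?thesis
      using t t' unfolding solves_system_def by simp
  next
    case False
    then have j: "j \<in> {1..n-1}" "j \<in> {1..n}"
      using Suc.prems by auto
    have "P' n (t' j) - real j * s' \<le> P' n (t j) - real j * s"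
      using P'_mono[of "t' j" "t j" n] solves_system_in_01[OF t' j(2)] Suc.IH[OF j(2)] \<open>s \<le> s'\<close>
      by (simp add: mult_left_mono diff_mono)
    then have "P_legendre n (t' (Suc j)) \<le> P_legendre n (t (Suc j))"
      using t t' j(1) unfolding solves_system_def by simp
    then show ?thesis
      using solves_system_in_01[OF t Suc.prems] solves_system_in_01[OF t' Suc.prems]
      by (simp add: P_legendre_le_iff)
  qed
qed simp

lemma solves_system_unique:
  assumes "solves_system n s t" "solves_system n s' t'"
  shows "s = s'"
proof -
  have "s' \<le> s" if t: "solves_system n s t" and t': "solves_system n s' t'" and "s \<le> s'" for s s' t t'
  proof -
    have "t' n \<in> {0..1}" "t n \<in> {0..1}" "t' n \<le> t n"
      using solves_system_in_01[OF t] solves_system_in_01[OF t'] solves_system_comparison[OF t t' \<open>s \<le> s'\<close>] n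
      by auto
    then have "real n * s' \<le> real n * s"
      using mono_onD[OF mono_on_P_tangent_1] t t' unfolding solves_system_def by metis
    then show ?thesis
      using n by simp
  qed
  from this[OF assms] this[OF assms(2,1)] show ?thesis
    by linarith
qed

end

(* shoot n s k is t_(k+1). *)
primrec shoot :: "nat \<Rightarrow> real \<Rightarrow> nat \<Rightarrow> real" where
  "shoot n s 0 = 0"
| "shoot n s (Suc k) = clamped_inv 0 1 (P_legendre n) (P' n (shoot n s k) - real (Suc k) * s)"

declare shoot.simps(2) [simp del]

context
  fixes n :: nat
  assumes n: "2 \<le> n"
begin

lemma strict_mono_on_P_legendre_01: "strict_mono_on {0..1} (P_legendre n)"
  using strict_mono_on_P_legendre[OF n] by (rule monotone_on_subset) auto

lemma shoot_in_01: "shoot n s k \<in> {0..1}"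
  using clamped_inv_in_Icc[OF zero_le_one continuous_on_P_legendre strict_mono_on_P_legendre_01] by (cases k) (auto simp: shoot.simps(2))

lemma P_legendre_shoot_Suc:
  "P_legendre n (shoot n s (Suc k)) = max 0 (min (P_legendre n 1) (P' n (shoot n s k) - real (Suc k) * s))"
  using f_clamped_inv[OF _ continuous_on_P_legendre strict_mono_on_P_legendre_01] by (simp add: shoot.simps(2))

lemma continuous_on_shoot: "continuous_on UNIV (\<lambda>s. shoot n s k)"
proof (induction k)
  case (Suc k)
  have "continuous_on UNIV (\<lambda>s. P' n (shoot n s k) - real (Suc k) * s)"
    by (intro continuous_intros continuous_on_compose2[OF continuous_on_P' Suc]) auto
  then have "continuous_on UNIV (\<lambda>s. clamped_inv 0 1 (P_legendre n) (P' n (shoot n s k) - real (Suc k) * s))"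
    by (rule continuous_on_compose2[OF continuous_on_clamped_inv[OF zero_le_one continuous_on_P_legendre strict_mono_on_P_legendre_01]]) auto
  then show ?case
    by (simp add: shoot.simps(2))
qed simp

lemma shoot_at_1: "shoot n 1 k = 0"
proof (induction k)
  case (Suc k)
  have "P_legendre n (shoot n 1 (Suc k)) = P_legendre n 0"
    using Suc P'_0[of n] n P_legendre_shoot_Suc[of 1 k] P_legendre_nonneg[of 1 n] by simp
  then show ?case
    using shoot_in_01[of 1 "Suc k"] P_legendre_eq_iff[OF n, of "shoot n 1 (Suc k)" 0] by simp
qed simp

lemma shoot_root_exists: "\<exists>s. 0 < s \<and> s < 1 \<and> P_tangent_1 n (shoot n s (n - 1)) = real n * s"
proof -
  let ?D = "\<lambda>s. P_tangent_1 n (shoot n s (n - 1)) - real n * s"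
  have "continuous_on {0..1} ?D"
    by (intro continuous_intros continuous_on_compose2[OF continuous_on_P_tangent_1]
        continuous_on_subset[OF continuous_on_shoot]) auto
  moreover have D1: "?D 1 = 1 - real n"
    using shoot_at_1 P_tangent_1_0[of n] n by simp
  moreover have D0: "1 \<le> ?D 0"
    using mono_onD[OF mono_on_P_tangent_1[of n], of 0 "shoot n 0 (n - 1)"] shoot_in_01 P_tangent_1_0[of n] n
    by simp
  ultimately obtain s where s: "0 \<le> s" "s \<le> 1" "?D s = 0"
    using IVT2'[of ?D 1 0 0] n by auto
  moreover have "s \<noteq> 0" "s \<noteq> 1"
    using s D0 D1 n by auto
  ultimately show ?thesis
    by (intro exI[of _ s]) auto
qed

context
  fixes s :: real
  assumes s: "0 < s" "s < 1"
    and root: "P_tangent_1 n (shoot n s (n - 1)) = real n * s"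
begin

lemma shoot_defect_propagates:
  assumes "P_tangent_1 n (shoot n s k) \<le> real (Suc k) * s"
  shows "P_tangent_1 n (shoot n s (Suc k)) < real (Suc (Suc k)) * s"
proof -
  let ?t = "shoot n s k"
  have "P' n ?t - real (Suc k) * s \<le> P_legendre n ?t"
    using assms P'_eq_P_legendre_plus_P_tangent_1[of n ?t] by simp
  then have "P_legendre n (shoot n s (Suc k)) \<le> P_legendre n ?t"
    using P_legendre_shoot_Suc[of s k] P_legendre_nonneg[of ?t n] shoot_in_01[of s k] by auto
  then have "P_tangent_1 n (shoot n s (Suc k)) \<le> P_tangent_1 n ?t"
    using mono_onD[OF mono_on_P_tangent_1] shoot_in_01 by (simp add: P_legendre_le_iff[OF n])
  with assms s show ?thesis
    by (simp add: distrib_right)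
qed

lemma shoot_defect_pos:
  assumes "k < n - 1"
  shows "real (Suc k) * s < P_tangent_1 n (shoot n s k)"
proof (rule ccontr)
  assume neg: "\<not> ?thesis"
  have "P_tangent_1 n (shoot n s m) < real (Suc m) * s" if "Suc k \<le> m" for m
    using that
  proof (induction m rule: dec_induct)
    case base
    show ?case
      using neg by (intro shoot_defect_propagates) simp
  next
    case (step m)
    then show ?case
      by (intro shoot_defect_propagates) simp
  qed
  from this[of "n - 1"] show False
    using assms root n by simp
qed

lemma shoot_lt_1:
  assumes "k \<le> n - 1"
  shows "shoot n s k < 1"
proof (rule ccontr)
  assume "\<not> ?thesis"
  then have "shoot n s k = 1"
    using shoot_in_01[of s k] by simp
  have "shoot n s m = 1" if "k \<le> m" "m \<le> n - 1" for m
    using that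
  proof (induction m rule: dec_induct)
    case base
    show ?case by fact
  next
    case (step m)
    have "real (Suc m) * s \<le> real (Suc m)"
      using s by simp
    also have "\<dots> \<le> real n"
      using step.prems by simp
    finally have "real (Suc m) * s \<le> real n" .
    then have "P_legendre n 1 \<le> P' n (shoot n s m) - real (Suc m) * s"
      using step P'_eq_P_legendre_plus_P_tangent_1[of n 1] by simp
    then have "P_legendre n (shoot n s (Suc m)) = P_legendre n 1"
      using P_legendre_shoot_Suc[of s m] P_legendre_nonneg[of 1 n] by simp
    then show ?case
      using shoot_in_01[of s "Suc m"] by (simp add: P_legendre_eq_iff[OF n])
  qed
  from this[of "n - 1"] have "real n = real n * s"
    using assms root by simp
  with s n show False
    by simp
qed

lemma shoot_Suc_solves:
  assumes "Suc k \<le> n - 1"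
  shows "shoot n s k < shoot n s (Suc k)"
    and "P_legendre n (shoot n s (Suc k)) = P' n (shoot n s k) - real (Suc k) * s"
proof -
  let ?t = "shoot n s k" and ?y = "P' n (shoot n s k) - real (Suc k) * s"
  have "P_legendre n ?t < ?y"
    using shoot_defect_pos[of k] assms P'_eq_P_legendre_plus_P_tangent_1[of n ?t] by simp
  moreover have "?y \<le> P_legendre n 1"
  proof (rule ccontr)
    assume "\<not> ?y \<le> P_legendre n 1"
    then have "P_legendre n (shoot n s (Suc k)) = P_legendre n 1"
      using P_legendre_shoot_Suc[of s k] P_legendre_nonneg[of 1 n] by simp
    then have "shoot n s (Suc k) = 1"
      using shoot_in_01[of s "Suc k"] by (simp add: P_legendre_eq_iff[OF n])
    with shoot_lt_1[of "Suc k"] assms show False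
      by simp
  qed
  moreover have "0 \<le> P_legendre n ?t"
    using P_legendre_nonneg shoot_in_01 by simp
  ultimately show eq: "P_legendre n (shoot n s (Suc k)) = ?y"
    using P_legendre_shoot_Suc[of s k] by simp
  show "?t < shoot n s (Suc k)"
    using eq \<open>P_legendre n ?t < ?y\<close> shoot_in_01 by (simp add: P_legendre_less_iff[OF n, symmetric])
qed

end

lemma solves_system_exists: "\<exists>s t. 0 < s \<and> s < 1 \<and> solves_system n s t"
proof -
  obtain s where s: "0 < s" "s < 1" and root: "P_tangent_1 n (shoot n s (n - 1)) = real n * s"
    using shoot_root_exists by blast
  have "solves_system n s (\<lambda>j. shoot n s (j - 1))"
    unfolding solves_system_def
  proof (intro conjI ballI)
    fix j assume "j \<in> {1..n-1}"
    then obtain k where "j = Suc k" "Suc k \<le> n - 1"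
      by (cases j) auto
    then show "shoot n s (j - 1) < shoot n s (j + 1 - 1)"
      and "P_legendre n (shoot n s (j + 1 - 1)) = P' n (shoot n s (j - 1)) - real j * s"
      using shoot_Suc_solves[OF s root] by simp_all
  qed (use shoot_in_01 root n in \<open>simp_all add: Suc_diff_le\<close>)
  with s show ?thesis
    by blast
qed

end

definition eps_system :: "nat \<Rightarrow> real \<Rightarrow> (nat \<Rightarrow> real) \<Rightarrow> bool" where
  "eps_system n \<zeta> \<epsilon> \<longleftrightarrow>
       \<epsilon> 1 = 1 \<and>
       (\<forall>j\<in>{1..n-1}.
          P' n (1 - \<epsilon> (j+1)) - P' n (1 - \<epsilon> j)
            = \<epsilon> (j+1) * P' n (1 - \<epsilon> (j+1)) + P n (1 - \<epsilon> (j+1)) - real j / \<zeta>) \<and>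
       0 \<le> \<epsilon> n \<and>
       (\<forall>j\<in>{1..n-1}. \<epsilon> (j+1) < \<epsilon> j) \<and>
       \<zeta> = real n / (\<epsilon> n * P' n (1 - \<epsilon> n) + P n (1 - \<epsilon> n))"

lemma eps_system_iff_solves_system:
  assumes "\<zeta> \<noteq> 0" "0 < n"
  shows "eps_system n \<zeta> \<epsilon> \<longleftrightarrow> solves_system n (1 / \<zeta>) (\<lambda>j. 1 - \<epsilon> j)"
proof -
  have step_eq: "P' n (1 - \<epsilon> (j+1)) - P' n (1 - \<epsilon> j)
        = \<epsilon> (j+1) * P' n (1 - \<epsilon> (j+1)) + P n (1 - \<epsilon> (j+1)) - real j / \<zeta>
    \<longleftrightarrow> P_legendre n (1 - \<epsilon> (j+1)) = P' n (1 - \<epsilon> j) - real j * (1 / \<zeta>)" for j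
    by (auto simp: P_legendre_def algebra_simps)
  have final_eq: "\<zeta> = real n / X \<longleftrightarrow> X = real n * (1 / \<zeta>)" for X
    using assms by (simp add: eq_divide_eq divide_eq_eq mult.commute)
  have "P_tangent_1 n (1 - \<epsilon> n) = \<epsilon> n * P' n (1 - \<epsilon> n) + P n (1 - \<epsilon> n)"
    by (simp add: P_tangent_1_def)
  then show ?thesis
    unfolding eps_system_def solves_system_def step_eq final_eq by simp
qed

theorem mainTheorem8:
  fixes n :: nat
  assumes "n > 2"
  shows "\<exists>!\<zeta>::real. \<zeta> > 1 \<and>
    (\<exists>\<epsilon> :: nat \<Rightarrow> real.
       \<epsilon> 1 = 1 \<and>
       (\<forall>j\<in>{1..n-1}.
          P' n (1 - \<epsilon> (j+1)) - P' n (1 - \<epsilon> j)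
            = \<epsilon> (j+1) * P' n (1 - \<epsilon> (j+1)) + P n (1 - \<epsilon> (j+1)) - real j / \<zeta>) \<and>
       0 \<le> \<epsilon> n \<and>
       (\<forall>j\<in>{1..n-1}. \<epsilon> (j+1) < \<epsilon> j) \<and>
       \<zeta> = real n / (\<epsilon> n * P' n (1 - \<epsilon> n) + P n (1 - \<epsilon> n)))"
  unfolding eps_system_def[symmetric]
proof -
  have n: "2 \<le> n"
    using assms by simp
  obtain s t where s: "0 < s" "s < 1" and t: "solves_system n s t"
    using solves_system_exists[OF n] by blast
  show "\<exists>!\<zeta>. 1 < \<zeta> \<and> (\<exists>\<epsilon>. eps_system n \<zeta> \<epsilon>)"
  proof (rule ex1I[of _ "1 / s"])
    have "eps_system n (1 / s) (\<lambda>j. 1 - t j)"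
      using eps_system_iff_solves_system[of "1 / s" n "\<lambda>j. 1 - t j"] s t n by simp
    with s show "1 < 1 / s \<and> (\<exists>\<epsilon>. eps_system n (1 / s) \<epsilon>)"
      by auto
  next
    fix \<zeta> assume "1 < \<zeta> \<and> (\<exists>\<epsilon>. eps_system n \<zeta> \<epsilon>)"
    then obtain \<epsilon> where "1 < \<zeta>" "eps_system n \<zeta> \<epsilon>"
      by blast
    then have "solves_system n (1 / \<zeta>) (\<lambda>j. 1 - \<epsilon> j)"
      using eps_system_iff_solves_system n by simp
    then have "1 / \<zeta> = s"
      using solves_system_unique[OF n _ t] by blast
    then show "\<zeta> = 1 / s"
      by auto
  qed
qed

end
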